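(* When the procedure $\Gamma\mathcal{DAG}_2$ described below produces a directed acyclic graph with $n$ vertices, it performs $O(n^2)$ calls to the random number generator and solves the equation defining $t$ (in $\Gamma\mathcal H$) exactly $n$ times.
   Context: $\mathrm{Set}(z,w)=\sum_{n\ge0}\frac{z^n}{(1+w)^{\binom n2}n!}$; $\mathrm{DAG}(z,w,u)=\frac{\mathrm{Set}((u-1)z,w)}{\mathrm{Set}(-z,w)}$ is the graphic generating function of labelled DAGs (by vertices, edges, sources). An $\mathcal H$-structure is a labelled DAG with at least one vertex whose smallest-labelled source is an isolated vertex (its distinguished source). Mutually recursive procedures: $\Gamma\mathcal H(z,w,u)$: draw $x$ uniform in $[0,1)$ (one RNG call); compute (solve for) the unique $t\in[0,u]$ with $\frac{\mathrm{Set}((t-1)z,w)-\mathrm{Set}(-z,w)}{\mathrm{Set}((u-1)z,w)-\mathrm{Set}(-z,w)}=x$; let $G_1=\Gamma\mathcal{DAG}_2(\frac z{1+w},w,t)$; add a new isolated vertex $v$, give it a uniform label among $\{1,\dots,v(G_1)+1\}$, relabel $G_1$ order-preservingly with the remaining labels, then cyclically permute source labels so that $v$ has the smallest source label. $\Gamma\mathcal{DAG}_2(z,w,u)$: draw a Bernoulli variable with parameter $1/\mathrm{DAG}(z,w,u)$ (one RNG call); if it succeeds return the empty graph. Otherwise let $H=\Gamma\mathcal H(z,w,u)$, $G_2=\Gamma\mathcal{DAG}_2(z,w,\frac w{1+w})$, form their disjoint union with a uniformly random order-preserving relabelling, and for each pair $(v_1,v_2)\in H\times G_2$: if $v_1$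 is the distinguished source of $H$ and $v_2$ a source of $G_2$ add edge $(v_1,v_2)$, otherwise add it with probability $\frac w{1+w}$ (one RNG call). Each Bernoulli or uniform real draw counts as one call to the random number generator. *)

theory Defs
  imports Complex_Main
begin

text \<open>Labelled directed graphs: a pair (n, E) with vertex set {0..<n} (labels 0..n-1,
  i.e. label i+1 of the paper is encoded as i) and edge set E of pairs (source, target).\<close>
type_synonym ldag = "nat \<times> (nat \<times> nat) set"

definition Set_gf :: "real \<Rightarrow> real \<Rightarrow> real" where
  "Set_gf z w = (\<Sum>n. z ^ n / ((1 + w) ^ (n choose 2) * fact n))"

definition DAG_gf :: "real \<Rightarrow> real \<Rightarrow> real \<Rightarrow> real" where
  "DAG_gf z w u = Set_gf ((u - 1) * z) w / Set_gf (- z) w"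

definition sources :: "ldag \<Rightarrow> nat set" where
  "sources G = {v. v < fst G \<and> (\<forall>a. (a, v) \<notin> snd G)}"

definition dist_source :: "ldag \<Rightarrow> nat" where
  "dist_source G = Min (sources G)"

definition shift :: "nat \<Rightarrow> nat \<Rightarrow> nat" where
  "shift k i = (if i < k then i else Suc i)"

text \<open>cyclic permutation of the (sorted) source labels S moving k to the smallest one;
  card {y\<in>S. y < i} is the position of i in the sorted list of S\<close>
definition cyc :: "nat set \<Rightarrow> nat \<Rightarrow> nat \<Rightarrow> nat" where
  "cyc S k i = (if i \<in> S then
      sorted_list_of_set S ! ((card {y\<in>S. y < i} + card S - card {y\<in>S. y < k}) mod card S)
    else i)"

text \<open>add a new isolated vertex with label k to G1, relabel G1 order-preservingly with
  the remaining labels, then cyclically permute the source labels\<close>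
definition add_vertex :: "nat \<Rightarrow> ldag \<Rightarrow> ldag" where
  "add_vertex k G1 = (let E' = map_prod (shift k) (shift k) ` snd G1;
                          \<sigma> = cyc (sources (Suc (fst G1), E')) k
                      in (Suc (fst G1), map_prod \<sigma> \<sigma> ` E'))"

text \<open>disjoint union of H and G2 where H receives the label set A and G2 the
  complementary labels (both order-preservingly), plus the edges (v1, v2) for (v1, v2) in C
  (v1 a vertex of H, v2 a vertex of G2)\<close>
definition merge :: "nat set \<Rightarrow> ldag \<Rightarrow> ldag \<Rightarrow> (nat \<times> nat) set \<Rightarrow> ldag" where
  "merge A H G2 C = (let fH = (\<lambda>i. sorted_list_of_set A ! i);
                         fG = (\<lambda>j. sorted_list_of_set ({0..<fst H + fst G2} - A) ! j)
                     in (fst H + fst G2,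
                         map_prod fH fH ` snd H \<union> map_prod fG fG ` snd G2
                           \<union> (\<lambda>(i, j). (fH i, fG j)) ` C))"

text \<open>Possible executions of the mutually recursive procedures.
  genH z w u H r s: a run of Gamma H(z,w,u) can output H using r RNG calls and s solutions
  of the equation defining t.  genD likewise for Gamma DAG_2.\<close>
inductive genH :: "real \<Rightarrow> real \<Rightarrow> real \<Rightarrow> ldag \<Rightarrow> nat \<Rightarrow> nat \<Rightarrow> bool"
  and genD :: "real \<Rightarrow> real \<Rightarrow> real \<Rightarrow> ldag \<Rightarrow> nat \<Rightarrow> nat \<Rightarrow> bool"
where
  H: "\<lbrakk> 0 \<le> x; x < 1; 0 \<le> t; t \<le> u;
        (Set_gf ((t - 1) * z) w - Set_gf (- z) w) / (Set_gf ((u - 1) * z) w - Set_gf (- z) w) = x;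
        genD (z / (1 + w)) w t G1 r s; k \<le> fst G1 \<rbrakk>
      \<Longrightarrow> genH z w u (add_vertex k G1) (Suc r) (Suc s)"
| D_empty: "0 < 1 / DAG_gf z w u \<Longrightarrow> genD z w u (0, {}) 1 0"
| D_union: "\<lbrakk> 1 / DAG_gf z w u < 1;
        genH z w u H r1 s1; genD z w (w / (1 + w)) G2 r2 s2;
        A \<subseteq> {0..<fst H + fst G2}; card A = fst H;
        C \<subseteq> {0..<fst H} \<times> {0..<fst G2};
        {dist_source H} \<times> sources G2 \<subseteq> C;
        C - {dist_source H} \<times> sources G2 \<noteq> {} \<longrightarrow> 0 < w / (1 + w);
        ({0..<fst H} \<times> {0..<fst G2}) - C \<noteq> {} \<longrightarrow> w / (1 + w) < 1 \<rbrakk>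
      \<Longrightarrow> genD z w u (merge A H G2 C)
            (Suc (r1 + r2 + (fst H * fst G2 - card (sources G2)))) (s1 + s2)"

end

theory Submission
  imports Defs
begin

text \<open>Every run of \<open>\<Gamma>\<H>\<close> adds exactly one vertex and solves the equation for \<open>t\<close> once,
  and every non-empty run of \<open>\<Gamma>DAG\<^sub>2\<close> is a disjoint union of the outputs of its two
  recursive calls; hence the number of solves equals the number of vertices. For the random
  draws, a simultaneous induction shows that an \<open>\<H>\<close>-structure on \<open>n\<close> vertices costs at
  most \<open>2n\<^sup>2\<close> draws and a DAG on \<open>n\<close> vertices fewer than \<open>2(n+1)\<^sup>2\<close>: the Bernoulli edge
  draws of a union of sizes \<open>a\<close> and \<open>b\<close> number at most \<open>ab\<close>, which is absorbed by the cross
  term \<open>4ab\<close> of \<open>2(a+b+1)\<^sup>2\<close>.\<close>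

lemma fst_add_vertex [simp]: "fst (add_vertex k G) = Suc (fst G)"
  by (simp add: add_vertex_def Let_def)

lemma fst_merge [simp]: "fst (merge A H G C) = fst H + fst G"
  by (simp add: merge_def Let_def)

lemma union_draws_bound:
  fixes a b r1 r2 c :: nat
  assumes "0 < a" "r1 \<le> 2 * a ^ 2" "r2 < 2 * (b + 1) ^ 2"
  shows "Suc (r1 + r2 + (a * b - c)) < 2 * (a + b + 1) ^ 2"
proof -
  have "a * b - c \<le> a * b" by simp
  moreover have "2 * (a + b + 1) ^ 2 = 2 * a ^ 2 + 2 * (b + 1) ^ 2 + 4 * (a * b) + 4 * a"
    by (simp add: power2_eq_square algebra_simps)
  ultimately show ?thesis using assms by linarith
qed

lemma genH_genD_counts:
  "(genH z w u H r s \<longrightarrow> s = fst H \<and> 0 < fst H \<and> r \<le> 2 * fst H ^ 2) \<and>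
   (genD z' w' u' G r' s' \<longrightarrow> s' = fst G \<and> r' < 2 * (fst G + 1) ^ 2)"
proof (induction rule: genH_genD.induct)
  case (H x t u z w G1 r s k)
  then show ?case by (simp add: Suc_le_eq)
next
  case (D_empty z w u)
  then show ?case by simp
next
  case (D_union z w u H r1 s1 G2 r2 s2 A C)
  then show ?case using union_draws_bound[of "fst H" r1 r2 "fst G2" "card (sources G2)"]
    by simp
qed

theorem lemma9:
  shows "\<exists>K::nat. \<forall>z w u G r s. genD z w u G r s \<longrightarrow>
           s = fst G \<and> r \<le> K * (fst G + 1) ^ 2"
proof (intro exI[of _ 2] allI impI)
  fix z w u G r s
  assume "genD z w u G r s"
  then show "s = fst G \<and> r \<le> 2 * (fst G + 1) ^ 2"
    using genH_genD_counts by (meson less_imp_le)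
qed

end
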